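(* Let $\mathcal{M}$ be the BST merge of a BST mergesort algorithm and let $\pi$ be a permutation of $\{1,\dots,n\}$, plotted as the points $(i,\pi_i)$. The arboral mergesort on $\pi$ returns an arborally satisfied set (containing all points $(i,\pi_i)$).
   Context: Points: horizontal axis is time (input position), vertical axis is key. A set $P$ of points is arborally satisfied if for every two points $x,y\in P$ not on a common horizontal or vertical line, the rectangle with corners $x,y$ contains a point of $P$ other than $x,y$. A top tree of a binary tree is a connected set of nodes containing the root. A BST merge $\mathcal{M}$ takes BSTs $T_A,T_B$ with disjoint keys and, for some top trees $\tau_a$ of $T_A$ and $\tau_b$ of $T_B$, returns a BST $T$ on the union of keys with a top tree $\tau=\tau_a\cup\tau_b$, the subtrees of $T$ hanging off $\tau$ being unchanged subtrees of $T_A$ or $T_B$, and $\tau$ containing the block boundaries (in the sorted merged order, blocks are maximal runs of keys from one input; boundaries are their first and last keys); the keys accessed by the merge are those of $\tau$. A BST mergesort recursively splits the input sequence into two contiguous nonempty parts, sorts each (singletons being one-node BSTs), and BST-merges the results. Arboral mergesort: it follows the same recursion as the BST mergesort on $\pi$; a part of size one is the single point $(i,\pi_i)$. To combine the point sets $A$ (left part) and $B$ (right part): if one is empty return the other; otherwise let $C$ be $A$ and $B$ placed side by side on the time axis, let $S$ be the set of keys accessed by $\mathcal{M}$ when merging the BSTs produced by the mergesort for these two parts, and add the points $(c,s)$ for all $s\in S$ and for each of three columns $c$: the first column of $C$, the rightmost column of $A$, and the last column of $C$. Return the resulting set. *)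

theory Defs
  imports Main "HOL-Library.Tree"
begin

(* Points: (time, key). *)
definition arborally_satisfied :: "(nat \<times> nat) set \<Rightarrow> bool" where
  "arborally_satisfied P \<longleftrightarrow>
     (\<forall>x\<in>P. \<forall>y\<in>P. fst x \<noteq> fst y \<and> snd x \<noteq> snd y \<longrightarrow>
        (\<exists>z\<in>P. z \<noteq> x \<and> z \<noteq> y \<and>
           min (fst x) (fst y) \<le> fst z \<and> fst z \<le> max (fst x) (fst y) \<and>
           min (snd x) (snd y) \<le> snd z \<and> snd z \<le> max (snd x) (snd y)))"

fun top_part :: "'a tree \<Rightarrow> 'a tree \<Rightarrow> bool" where
  "top_part Leaf t = True"
| "top_part (Node l a r) Leaf = False"
| "top_part (Node l a r) (Node l' a' r') = (a = a' \<and> top_part l l' \<and> top_part r r')"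

definition top_tree :: "'a tree \<Rightarrow> 'a tree \<Rightarrow> bool" where
  "top_tree tau T \<longleftrightarrow> top_part tau T \<and> tau \<noteq> Leaf"

fun hanging :: "'a tree \<Rightarrow> 'a tree \<Rightarrow> 'a tree set" where
  "hanging Leaf t = {t}"
| "hanging (Node l a r) Leaf = {}"
| "hanging (Node l a r) (Node l' a' r') = hanging l l' \<union> hanging r r'"

(* x is a block boundary (first or last key of a maximal run of keys from one input)
   in the sorted order of A \<union> B, A and B disjoint *)
definition block_boundary :: "nat set \<Rightarrow> nat set \<Rightarrow> nat \<Rightarrow> bool" where
  "block_boundary A B x \<longleftrightarrow> x \<in> A \<union> B \<and>
     ((\<forall>y\<in>A \<union> B. y < x \<and> \<not>(\<exists>z\<in>A \<union> B. y < z \<and> z < x) \<longrightarrow> (y \<in> A \<longleftrightarrow> x \<notin> A))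
    \<or> (\<forall>y\<in>A \<union> B. x < y \<and> \<not>(\<exists>z\<in>A \<union> B. x < z \<and> z < y) \<longrightarrow> (y \<in> A \<longleftrightarrow> x \<notin> A)))"

(* M TA TB = (T, tau): the merged BST T and its top tree tau (accessed keys = keys of tau) *)
definition is_bst_merge :: "(nat tree \<Rightarrow> nat tree \<Rightarrow> nat tree \<times> nat tree) \<Rightarrow> bool" where
  "is_bst_merge M \<longleftrightarrow>
    (\<forall>TA TB. bst TA \<and> bst TB \<and> TA \<noteq> Leaf \<and> TB \<noteq> Leaf \<and> set_tree TA \<inter> set_tree TB = {} \<longrightarrow>
      (let T = fst (M TA TB); tau = snd (M TA TB) in
         bst T \<and> set_tree T = set_tree TA \<union> set_tree TB \<and> top_tree tau T \<and>
         (\<exists>ta tb. top_tree ta TA \<and> top_tree tb TB \<and>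
            set_tree tau = set_tree ta \<union> set_tree tb \<and>
            (\<forall>t\<in>hanging tau T. t \<noteq> Leaf \<longrightarrow> t \<in> hanging ta TA \<union> hanging tb TB)) \<and>
         {x. block_boundary (set_tree TA) (set_tree TB) x} \<subseteq> set_tree tau))"

definition split_pt :: "(nat list \<Rightarrow> nat) \<Rightarrow> nat list \<Rightarrow> nat" where
  "split_pt sp xs = max 1 (min (length xs - 1) (sp xs))"

lemma split_pt_bounds: "2 \<le> length xs \<Longrightarrow> 0 < split_pt sp xs \<and> split_pt sp xs < length xs"
  unfolding split_pt_def by auto

function bst_msort :: "(nat list \<Rightarrow> nat) \<Rightarrow> (nat tree \<Rightarrow> nat tree \<Rightarrow> nat tree \<times> nat tree)
    \<Rightarrow> nat list \<Rightarrow> nat tree" where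
  "bst_msort sp M xs =
     (if length xs = 0 then Leaf
      else if length xs = 1 then Node Leaf (hd xs) Leaf
      else fst (M (bst_msort sp M (take (split_pt sp xs) xs))
                  (bst_msort sp M (drop (split_pt sp xs) xs))))"
  by pat_completeness auto
termination
  by (relation "measure (\<lambda>(_, _, xs). length xs)")
     (auto simp: min_def max_def split_pt_def le_Suc_eq)

(* arboral mergesort on the subsequence xs occupying columns t0, t0+1, ... *)
function arb_msort :: "(nat list \<Rightarrow> nat) \<Rightarrow> (nat tree \<Rightarrow> nat tree \<Rightarrow> nat tree \<times> nat tree)
    \<Rightarrow> nat \<Rightarrow> nat list \<Rightarrow> (nat \<times> nat) set" where
  "arb_msort sp M t0 xs =
     (if length xs = 0 then {}
      else if length xs = 1 then {(t0, hd xs)}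
      else (let k = split_pt sp xs;
                A = arb_msort sp M t0 (take k xs);
                B = arb_msort sp M (t0 + k) (drop k xs);
                S = set_tree (snd (M (bst_msort sp M (take k xs)) (bst_msort sp M (drop k xs))))
            in if A = {} then B else if B = {} then A
               else A \<union> B \<union> {(c, s). c \<in> {t0, t0 + k - 1, t0 + length xs - 1} \<and> s \<in> S}))"
  by pat_completeness auto
termination
  by (relation "measure (\<lambda>(_, _, _, xs). length xs)")
     (auto simp: min_def max_def split_pt_def le_Suc_eq)

end

theory Submission
  imports Defs
begin

(* Besides arboral satisfaction, the point set built for a BST T
   on the columns c1..c3 is kept ready (ancestor_ready) at c1 and at c3.  In a merge, a pair made
   of an old point (t, a) and a new access (c, s) is witnessed in column c when a is accessed or an
   accessed key lies strictly between a and s: a block boundary if s comes from the other input,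
   otherwise the lowest common ancestor of a and s, which lies in the top tree.  The remaining
   case, s an ancestor of a, is handled by the readiness of the half containing (t, a).  The
   merged set is ready again, since an ancestor relation avoiding the top tree lives in a subtree
   hanging off it, i.e. in a subtree of one of the two inputs. *)

declare bst_msort.simps[simp del] arb_msort.simps[simp del]

(* Reflexive: every key of T is its own ancestor. *)
definition ancestor :: "'a tree \<Rightarrow> 'a \<Rightarrow> 'a \<Rightarrow> bool" where
  "ancestor T s a \<longleftrightarrow> (\<exists>l r. Node l s r \<in> subtrees T \<and> a \<in> set_tree (Node l s r))"

lemma ancestor_Leaf[simp]: "\<not> ancestor Leaf s a"
  by (simp add: ancestor_def)

lemma ancestor_Node[simp]:
  "ancestor (Node l v r) s a \<longleftrightarrow>
     (v = s \<and> a \<in> set_tree (Node l v r)) \<or> ancestor l s a \<or> ancestor r s a"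
  by (auto simp: ancestor_def)

lemma ancestor_in_set_tree: "ancestor T s a \<Longrightarrow> a \<in> set_tree T \<and> s \<in> set_tree T"
  by (induction T) auto

lemma bst_common_ancestor_between:
  fixes a s :: "'a::linorder"
  assumes "bst T" "a \<in> set_tree T" "s \<in> set_tree T"
  shows "\<exists>w. ancestor T w a \<and> ancestor T w s \<and> min a s \<le> w \<and> w \<le> max a s"
  using assms
proof (induction T)
  case Leaf
  then show ?case by simp
next
  case (Node l v r)
  consider "a < v" "s < v" | "v < a" "v < s" | "min a s \<le> v" "v \<le> max a s"
    by fastforce
  then show ?case
  proof cases
    case 1
    then show ?thesis using Node by fastforce
  next
    case 2
    then show ?thesis using Node by fastforce
  next
    case 3
    then show ?thesis using Node.prems by (intro exI[of _ v]) auto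
  qed
qed

lemma top_part_set_tree: "top_part \<sigma> T \<Longrightarrow> set_tree \<sigma> \<subseteq> set_tree T"
  by (induction \<sigma> T rule: top_part.induct) auto

lemma top_part_ancestor_closed:
  "top_part \<sigma> T \<Longrightarrow> bst T \<Longrightarrow> ancestor T w s \<Longrightarrow> s \<in> set_tree \<sigma> \<Longrightarrow> w \<in> set_tree \<sigma>"
proof (induction \<sigma> T rule: top_part.induct)
  case (3 l a r l' a' r')
  then show ?case
    using top_part_set_tree[of l l'] top_part_set_tree[of r r'] ancestor_in_set_tree[of l' w s]
      ancestor_in_set_tree[of r' w s]
    by fastforce
qed auto

lemma ancestor_in_hanging:
  "top_part \<sigma> T \<Longrightarrow> s \<notin> set_tree \<sigma> \<Longrightarrow> ancestor T s a \<Longrightarrow> \<exists>H\<in>hanging \<sigma> T. ancestor H s a"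
  by (induction \<sigma> T rule: top_part.induct) auto

lemma ancestor_of_hanging:
  "top_part \<sigma> T \<Longrightarrow> H \<in> hanging \<sigma> T \<Longrightarrow> ancestor H s a \<Longrightarrow> ancestor T s a"
  by (induction \<sigma> T rule: top_part.induct) auto

lemma top_key_or_key_between_or_ancestor:
  fixes S :: "'a::linorder set"
  assumes "bst T" "top_part \<sigma> T" "set_tree \<sigma> = S \<inter> set_tree T"
    and "a \<in> set_tree T" "s \<in> S" "a \<noteq> s"
    and outside: "s \<notin> set_tree T \<Longrightarrow> \<exists>u\<in>S \<inter> set_tree T. min a s \<le> u \<and> u \<le> max a s"
  shows "a \<in> S \<or> (\<exists>s'\<in>S. min a s < s' \<and> s' < max a s) \<or> ancestor T s a"
proof -
  obtain u where u: "u \<in> S" "min a s \<le> u" "u \<le> max a s" "u = s \<longrightarrow> ancestor T s a"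
  proof (cases "s \<in> set_tree T")
    case True
    then obtain w where w: "ancestor T w a" "ancestor T w s" "min a s \<le> w" "w \<le> max a s"
      using bst_common_ancestor_between assms(1,4) by blast
    have "w \<in> S"
      using top_part_ancestor_closed[OF assms(2,1) w(2)] True assms(3,5) by auto
    then show thesis using w that by blast
  next
    case False
    then show thesis using outside that by blast
  qed
  then show ?thesis
    using \<open>a \<noteq> s\<close> by (cases "u = a") (auto simp: order_le_less min_def max_def split: if_splits)
qed

lemma adjacent_change:
  fixes K X :: "'a::linorder set"
  assumes "finite K" "a \<in> K" "b \<in> K" "a \<in> X" "b \<notin> X" "a < b"
  obtains u v where "u \<in> K" "v \<in> K" "u \<in> X" "v \<notin> X" "a \<le> u" "u < v" "v \<le> b"
    "\<not> (\<exists>z\<in>K. u < z \<and> z < v)"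
proof -
  define u where "u = Max {x \<in> K \<inter> X. x < b}"
  have "u \<in> {x \<in> K \<inter> X. x < b}"
    unfolding u_def using assms by (intro Max_in) auto
  moreover have "a \<le> u"
    unfolding u_def using assms by (intro Max_ge) auto
  ultimately have u: "u \<in> K \<inter> X" "u < b" "a \<le> u" by auto
  have u_max: "x \<le> u" if "x \<in> K \<inter> X" "x < b" for x
    using Max_ge[of "{x \<in> K \<inter> X. x < b}" x] assms that unfolding u_def by auto
  define v where "v = Min {x \<in> K. u < x}"
  have "v \<in> {x \<in> K. u < x}"
    unfolding v_def using assms u by (intro Min_in) auto
  moreover have "v \<le> b"
    unfolding v_def using assms u by (intro Min_le) auto
  ultimately have v: "v \<in> K" "u < v" "v \<le> b" by auto
  have v_min: "v \<le> z" if "z \<in> K" "u < z" for z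
    using Min_le[of "{x \<in> K. u < x}" z] assms that unfolding v_def by auto
  have "v \<notin> X"
  proof
    assume "v \<in> X"
    then have "v < b" using v assms(5) by (cases "v = b") auto
    then show False using u_max[of v] \<open>v \<in> X\<close> v by auto
  qed
  then show thesis
    using that u v v_min by fastforce
qed

lemma block_boundary_if_adjacent:
  assumes "u \<in> KA \<union> KB" "v \<in> KA \<union> KB" "u < v" "\<not> (\<exists>z\<in>KA \<union> KB. u < z \<and> z < v)"
    and "u \<in> KA \<longleftrightarrow> v \<notin> KA"
  shows "block_boundary KA KB u" "block_boundary KA KB v"
  using assms unfolding block_boundary_def by (metis linorder_neqE_nat)+

lemma block_boundaries_between:
  assumes "finite (KA \<union> KB)" "KA \<inter> KB = {}" "a \<in> KA" "b \<in> KB"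
  obtains u v where "u \<in> KA" "v \<in> KB" "block_boundary KA KB u" "block_boundary KA KB v"
    "min a b \<le> u" "u \<le> max a b" "min a b \<le> v" "v \<le> max a b"
proof (cases "a < b")
  case True
  obtain u v where "u \<in> KA \<union> KB" "v \<in> KA \<union> KB" "u \<in> KA" "v \<notin> KA" "a \<le> u" "u < v" "v \<le> b"
    "\<not> (\<exists>z\<in>KA \<union> KB. u < z \<and> z < v)"
    using adjacent_change[OF assms(1), of a b KA] assms True by blast
  then show thesis
    using that[of u v] block_boundary_if_adjacent[of u KA KB v] by simp
next
  case False
  then have "b < a" using assms by (metis disjoint_iff linorder_neqE_nat)
  obtain v u where "v \<in> KA \<union> KB" "u \<in> KA \<union> KB" "v \<in> KB" "u \<notin> KB" "b \<le> v" "v < u" "u \<le> a"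
    "\<not> (\<exists>z\<in>KA \<union> KB. v < z \<and> z < u)"
    using adjacent_change[OF assms(1), of b a KB] assms \<open>b < a\<close> by blast
  moreover have "u \<in> KA" "v \<notin> KA"
    using calculation assms(2) by auto
  ultimately show thesis
    using that[of u v] block_boundary_if_adjacent[of v KA KB u] by simp
qed

definition witnessed :: "(nat \<times> nat) set \<Rightarrow> nat \<times> nat \<Rightarrow> nat \<times> nat \<Rightarrow> bool" where
  "witnessed P x y \<longleftrightarrow> (\<exists>z\<in>P. z \<noteq> x \<and> z \<noteq> y \<and>
     min (fst x) (fst y) \<le> fst z \<and> fst z \<le> max (fst x) (fst y) \<and>
     min (snd x) (snd y) \<le> snd z \<and> snd z \<le> max (snd x) (snd y))"

lemma arborally_satisfied_iff_witnessed:
  "arborally_satisfied P \<longleftrightarrow>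
     (\<forall>x\<in>P. \<forall>y\<in>P. fst x \<noteq> fst y \<and> snd x \<noteq> snd y \<longrightarrow> witnessed P x y)"
  by (simp add: arborally_satisfied_def witnessed_def)

lemma witnessed_sym: "witnessed P x y \<longleftrightarrow> witnessed P y x"
  unfolding witnessed_def by (auto simp: min.commute max.commute)

lemma witnessed_mono: "witnessed P x y \<Longrightarrow> P \<subseteq> Q \<Longrightarrow> witnessed Q x y"
  unfolding witnessed_def by blast

lemma witnessedI:
  "(c, k) \<in> P \<Longrightarrow> (c, k) \<noteq> x \<Longrightarrow> (c, k) \<noteq> y \<Longrightarrow>
   min (fst x) (fst y) \<le> c \<Longrightarrow> c \<le> max (fst x) (fst y) \<Longrightarrow>
   min (snd x) (snd y) \<le> k \<Longrightarrow> k \<le> max (snd x) (snd y) \<Longrightarrow> witnessed P x y"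
  unfolding witnessed_def by force

lemma witnessed_via_column:
  assumes "(c', s) \<in> P \<or> witnessed P (t, a) (c', s)" "a \<noteq> s"
    and "c' \<noteq> c" "min t c \<le> c'" "c' \<le> max t c"
  shows "witnessed P (t, a) (c, s)"
  using assms(1)
proof
  assume "(c', s) \<in> P"
  then show ?thesis using assms(2-) by (intro witnessedI) auto
next
  assume "witnessed P (t, a) (c', s)"
  then obtain z where "z \<in> P" "z \<noteq> (t, a)" "min t c' \<le> fst z" "fst z \<le> max t c'"
    "min a s \<le> snd z" "snd z \<le> max a s"
    unfolding witnessed_def by auto
  moreover have "z \<noteq> (c, s)"
    using calculation assms(3-5) by (auto simp: min_def max_def split: if_splits)
  ultimately show ?thesis
    using assms(4,5) unfolding witnessed_def by (auto simp: min_def max_def split: if_splits)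
qed

(* If P is ready at column c, a later access to s in column c creates no unwitnessed rectangle
   with the points of P on the keys below s. *)
definition ancestor_ready :: "(nat \<times> nat) set \<Rightarrow> nat \<Rightarrow> nat tree \<Rightarrow> bool" where
  "ancestor_ready P c T \<longleftrightarrow> (\<forall>s a t. ancestor T s a \<and> s \<noteq> a \<and> (t, a) \<in> P \<longrightarrow>
     (c, s) \<in> P \<or> witnessed P (t, a) (c, s))"

lemma ancestor_ready_transfer:
  assumes "ancestor_ready Q c' T" "Q \<subseteq> P" "ancestor T s a" "s \<noteq> a" "(t, a) \<in> Q"
    and "min t c \<le> c'" "c' \<le> max t c"
  shows "(c, s) \<in> Q \<or> witnessed P (t, a) (c, s)"
proof -
  have "(c', s) \<in> Q \<or> witnessed Q (t, a) (c', s)"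
    using assms(1,3-5) unfolding ancestor_ready_def by blast
  then have ready: "(c', s) \<in> Q \<or> witnessed P (t, a) (c', s)"
    using witnessed_mono assms(2) by blast
  show ?thesis
  proof (cases "c' = c")
    case False
    then show ?thesis
      using witnessed_via_column[of c' s P t a c] ready assms(2,4,6,7) by blast
  qed (use ready in blast)
qed

locale bst_merge =
  fixes TA TB T \<sigma> \<sigma>A \<sigma>B :: "nat tree"
  assumes bst_TA: "bst TA" and bst_TB: "bst TB" and bst_T: "bst T"
    and keys_disjoint: "set_tree TA \<inter> set_tree TB = {}"
    and set_T: "set_tree T = set_tree TA \<union> set_tree TB"
    and top: "top_part \<sigma> T" and top_A: "top_part \<sigma>A TA" and top_B: "top_part \<sigma>B TB"
    and set_\<sigma>: "set_tree \<sigma> = set_tree \<sigma>A \<union> set_tree \<sigma>B"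
    and hanging: "\<forall>H\<in>hanging \<sigma> T. H \<noteq> Leaf \<longrightarrow> H \<in> hanging \<sigma>A TA \<union> hanging \<sigma>B TB"
    and boundaries: "{x. block_boundary (set_tree TA) (set_tree TB) x} \<subseteq> set_tree \<sigma>"
begin

lemma accessed_split:
  "set_tree \<sigma>A = set_tree \<sigma> \<inter> set_tree TA" "set_tree \<sigma>B = set_tree \<sigma> \<inter> set_tree TB"
  using top_part_set_tree[OF top_A] top_part_set_tree[OF top_B] set_\<sigma> keys_disjoint by auto

lemma accessed_subset: "set_tree \<sigma> \<subseteq> set_tree TA \<union> set_tree TB"
  using top_part_set_tree[OF top] set_T by simp

lemma accessed_or_key_between_or_ancestor:
  assumes "Q \<in> {TA, TB}" "a \<in> set_tree Q" "s \<in> set_tree \<sigma>" "a \<noteq> s"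
  shows "a \<in> set_tree \<sigma> \<or> (\<exists>s'\<in>set_tree \<sigma>. min a s < s' \<and> s' < max a s) \<or> ancestor Q s a"
proof -
  obtain \<sigma>Q where \<sigma>Q: "top_part \<sigma>Q Q" "set_tree \<sigma>Q = set_tree \<sigma> \<inter> set_tree Q"
    using assms(1) top_A top_B accessed_split by blast
  have "\<exists>u\<in>set_tree \<sigma> \<inter> set_tree Q. min a s \<le> u \<and> u \<le> max a s"
    if s_outside: "s \<notin> set_tree Q"
  proof -
    have "s \<in> set_tree TA \<union> set_tree TB"
      using accessed_subset assms(3) by blast
    then consider "Q = TA" "s \<in> set_tree TB" | "Q = TB" "s \<in> set_tree TA"
      using assms(1) s_outside by blast
    then show ?thesis
    proof cases
      case 1
      then obtain u where "u \<in> set_tree TA" "block_boundary (set_tree TA) (set_tree TB) u"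
        "min a s \<le> u" "u \<le> max a s"
        using block_boundaries_between[OF _ keys_disjoint, of a s] assms(2) by auto
      then show ?thesis using boundaries 1 by auto
    next
      case 2
      then obtain v where "v \<in> set_tree TB" "block_boundary (set_tree TA) (set_tree TB) v"
        "min s a \<le> v" "v \<le> max s a"
        using block_boundaries_between[OF _ keys_disjoint, of s a] assms(2) by auto
      then show ?thesis using boundaries 2 by (auto simp: min.commute max.commute)
    qed
  qed
  then show ?thesis
    using top_key_or_key_between_or_ancestor[OF _ \<sigma>Q assms(2-4)] assms(1) bst_TA bst_TB by blast
qed

lemma ancestor_outside_top:
  assumes "ancestor T s a" "s \<notin> set_tree \<sigma>"
  shows "ancestor TA s a \<or> ancestor TB s a"
proof -
  obtain H where "H \<in> hanging \<sigma> T" "ancestor H s a"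
    using ancestor_in_hanging[OF top assms(2,1)] by blast
  then show ?thesis
    using hanging ancestor_of_hanging[OF top_A] ancestor_of_hanging[OF top_B] by force
qed

end

locale arboral_merge = bst_merge +
  fixes A B :: "(nat \<times> nat) set" and c1 c2 c3 :: nat
  assumes c12: "c1 \<le> c2" and c23: "c2 < c3"
    and A_range: "\<And>t a. (t, a) \<in> A \<Longrightarrow> c1 \<le> t \<and> t \<le> c2 \<and> a \<in> set_tree TA"
    and B_range: "\<And>t a. (t, a) \<in> B \<Longrightarrow> c2 < t \<and> t \<le> c3 \<and> a \<in> set_tree TB"
    and sat_A: "arborally_satisfied A" and sat_B: "arborally_satisfied B"
    and ready_A: "ancestor_ready A c1 TA" "ancestor_ready A c2 TA"
    and ready_B: "ancestor_ready B (Suc c2) TB" "ancestor_ready B c3 TB"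
begin

(* c1, c2, c3 are the first column of C, the rightmost column of A and the last column of C. *)
definition merged :: "(nat \<times> nat) set" where
  "merged = A \<union> B \<union> {c1, c2, c3} \<times> set_tree \<sigma>"

lemma accessed_in_merged: "c \<in> {c1, c2, c3} \<Longrightarrow> s \<in> set_tree \<sigma> \<Longrightarrow> (c, s) \<in> merged"
  by (simp add: merged_def)

lemma A_B_subset_merged: "A \<subseteq> merged" "B \<subseteq> merged"
  by (auto simp: merged_def)

lemma witnessed_unless_ancestor:
  assumes "Q \<in> {TA, TB}" "a \<in> set_tree Q" "s \<in> set_tree \<sigma>" "a \<noteq> s" "t \<noteq> c" "c \<in> {c1, c2, c3}"
    and "ancestor Q s a \<Longrightarrow> witnessed merged (t, a) (c, s)"
  shows "witnessed merged (t, a) (c, s)"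
  using accessed_or_key_between_or_ancestor[OF assms(1-4)]
proof (elim disjE bexE conjE)
  assume "a \<in> set_tree \<sigma>"
  then show ?thesis
    using accessed_in_merged assms(4-6) by (intro witnessedI[of c a]) auto
next
  fix s' assume "s' \<in> set_tree \<sigma>" "min a s < s'" "s' < max a s"
  then show ?thesis
    using accessed_in_merged assms(6) by (intro witnessedI[of c s']) auto
qed (use assms(7) in blast)

lemma witnessed_old_new:
  assumes "(t, a) \<in> A \<union> B" "c \<in> {c1, c2, c3}" "s \<in> set_tree \<sigma>" "(c, s) \<notin> A \<union> B"
    and "t \<noteq> c" "a \<noteq> s"
  shows "witnessed merged (t, a) (c, s)"
proof -
  have via_ready: "witnessed merged (t, a) (c, s)"
    if "Q \<in> {A, B}" "ancestor_ready Q c' TQ" "TQ \<in> {TA, TB}" "(t, a) \<in> Q" "a \<in> set_tree TQ"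
      "min t c \<le> c'" "c' \<le> max t c" for Q TQ c'
  proof (rule witnessed_unless_ancestor[OF that(3,5) assms(3,6,5,2)])
    assume "ancestor TQ s a"
    then show "witnessed merged (t, a) (c, s)"
      using ancestor_ready_transfer[OF that(2) _ _ _ that(4,6,7), of merged] that(1)
        A_B_subset_merged assms(4,6) by blast
  qed
  have via_c2: "witnessed merged (t, a) (c, s)" if "c2 \<noteq> c" "min t c \<le> c2" "c2 \<le> max t c"
    using witnessed_via_column[of c2 s merged t a c] accessed_in_merged[OF _ assms(3)] assms(6) that
    by blast
  consider "(t, a) \<in> A" | "(t, a) \<in> B" using assms(1) by blast
  then show ?thesis
  proof cases
    case 1
    note range = A_range[OF 1]
    consider "c = c1" | "c = c2" | "c = c3" using assms(2) by blast
    then show ?thesis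
      by cases (use via_ready[OF _ ready_A(1)] via_ready[OF _ ready_A(2)] via_c2 1 range c23 in auto)
  next
    case 2
    note range = B_range[OF 2]
    consider "c = c1" | "c = c2" | "c = c3" using assms(2) by blast
    then show ?thesis
      by cases (use via_ready[OF _ ready_B(1)] via_ready[OF _ ready_B(2)] via_c2 2 range c12 in auto)
  qed
qed

lemma witnessed_A_B:
  assumes "(t, a) \<in> A" "(t', b) \<in> B"
  shows "witnessed merged (t, a) (t', b)"
proof -
  note a = A_range[OF assms(1)] and b = B_range[OF assms(2)]
  obtain v where "v \<in> set_tree TB" "block_boundary (set_tree TA) (set_tree TB) v"
    "min a b \<le> v" "v \<le> max a b"
    using block_boundaries_between[OF _ keys_disjoint, of a b] a b by auto
  moreover have "v \<noteq> a"
    using calculation a keys_disjoint by blast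
  ultimately show ?thesis
    using accessed_in_merged[of c2 v] boundaries a b by (intro witnessedI[of c2 v]) auto
qed

lemma witnessed_old_old:
  assumes old: "x \<in> A \<union> B" "y \<in> A \<union> B" and distinct: "fst x \<noteq> fst y \<and> snd x \<noteq> snd y"
  shows "witnessed merged x y"
proof -
  consider "x \<in> A" "y \<in> A" | "x \<in> B" "y \<in> B" | "x \<in> A" "y \<in> B" | "x \<in> B" "y \<in> A"
    using old by blast
  then show ?thesis
  proof cases
    case 1
    then show ?thesis using sat_A distinct witnessed_mono A_B_subset_merged
      unfolding arborally_satisfied_iff_witnessed by blast
  next
    case 2
    then show ?thesis using sat_B distinct witnessed_mono A_B_subset_merged
      unfolding arborally_satisfied_iff_witnessed by blast
  next
    case 3
    then show ?thesis using witnessed_A_B[of "fst x" "snd x" "fst y" "snd y"] by simp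
  next
    case 4
    then show ?thesis using witnessed_A_B[of "fst y" "snd y" "fst x" "snd x"] witnessed_sym by simp
  qed
qed

lemma merged_satisfied: "arborally_satisfied merged"
  unfolding arborally_satisfied_iff_witnessed
proof (intro ballI impI)
  fix x y assume "x \<in> merged" "y \<in> merged" and distinct: "fst x \<noteq> fst y \<and> snd x \<noteq> snd y"
  then consider "x \<in> A \<union> B" "y \<in> A \<union> B"
    | "x \<in> A \<union> B" "y \<notin> A \<union> B" "y \<in> {c1, c2, c3} \<times> set_tree \<sigma>"
    | "x \<notin> A \<union> B" "x \<in> {c1, c2, c3} \<times> set_tree \<sigma>" "y \<in> A \<union> B"
    | "x \<in> {c1, c2, c3} \<times> set_tree \<sigma>" "y \<in> {c1, c2, c3} \<times> set_tree \<sigma>"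
    unfolding merged_def by blast
  then show "witnessed merged x y"
  proof cases
    case 1
    then show ?thesis using witnessed_old_old distinct by blast
  next
    case 2
    then show ?thesis
      using witnessed_old_new[of "fst x" "snd x" "fst y" "snd y"] distinct by auto
  next
    case 3
    then show ?thesis
      using witnessed_old_new[of "fst y" "snd y" "fst x" "snd x"] distinct witnessed_sym by auto
  next
    case 4
    then show ?thesis
      using accessed_in_merged distinct
      by (intro witnessedI[of "fst x" "snd y"]) (auto simp: prod_eq_iff)
  qed
qed

lemma ancestor_below_top:
  assumes "ancestor T s a" "s \<notin> set_tree \<sigma>" "(t, a) \<in> merged"
  shows "(t, a) \<in> A \<and> ancestor TA s a \<or> (t, a) \<in> B \<and> ancestor TB s a"
proof -
  have "a \<notin> set_tree \<sigma>"
    using top_part_ancestor_closed[OF top bst_T assms(1)] assms(2) by blast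
  then have "(t, a) \<in> A \<union> B"
    using assms(3) unfolding merged_def by blast
  moreover have "ancestor TA s a \<or> ancestor TB s a"
    using ancestor_outside_top[OF assms(1,2)] .
  moreover have "a \<in> set_tree TA \<Longrightarrow> a \<notin> set_tree TB"
    using keys_disjoint by blast
  ultimately show ?thesis
    using A_range[of t a] B_range[of t a] ancestor_in_set_tree[of TA s a] ancestor_in_set_tree[of TB s a]
    by blast
qed

lemma merged_ready:
  assumes "c \<in> {c1, c2, c3}"
    and "ancestor_ready A cA TA" "\<And>t a. (t, a) \<in> A \<Longrightarrow> min t c \<le> cA \<and> cA \<le> max t c"
    and "ancestor_ready B cB TB" "\<And>t a. (t, a) \<in> B \<Longrightarrow> min t c \<le> cB \<and> cB \<le> max t c"
  shows "ancestor_ready merged c T"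
  unfolding ancestor_ready_def
proof (intro allI impI, elim conjE)
  fix s a t assume "ancestor T s a" "s \<noteq> a" "(t, a) \<in> merged"
  show "(c, s) \<in> merged \<or> witnessed merged (t, a) (c, s)"
  proof (cases "s \<in> set_tree \<sigma>")
    case False
    then consider "(t, a) \<in> A" "ancestor TA s a" | "(t, a) \<in> B" "ancestor TB s a"
      using ancestor_below_top \<open>ancestor T s a\<close> \<open>(t, a) \<in> merged\<close> by blast
    then show ?thesis
    proof cases
      case 1
      then show ?thesis
        using ancestor_ready_transfer[OF assms(2) A_B_subset_merged(1) 1(2) \<open>s \<noteq> a\<close> 1(1)]
          assms(3)[OF 1(1)] A_B_subset_merged(1) by blast
    next
      case 2
      then show ?thesis
        using ancestor_ready_transfer[OF assms(4) A_B_subset_merged(2) 2(2) \<open>s \<noteq> a\<close> 2(1)]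
          assms(5)[OF 2(1)] A_B_subset_merged(2) by blast
    qed
  qed (use assms(1) accessed_in_merged in blast)
qed

lemma merged_ready_first: "ancestor_ready merged c1 T"
  by (rule merged_ready[OF _ ready_A(1) _ ready_B(1)]) (use A_range B_range c12 in force)+

lemma merged_ready_last: "ancestor_ready merged c3 T"
  by (rule merged_ready[OF _ ready_A(2) _ ready_B(2)]) (use A_range B_range c23 in force)+

end

lemma msort_split_induct[consumes 1, case_names single split]:
  assumes "xs \<noteq> []"
    and single: "\<And>x. P [x]"
    and split: "\<And>xs. 2 \<le> length xs \<Longrightarrow> P (take (split_pt sp xs) xs) \<Longrightarrow>
      P (drop (split_pt sp xs) xs) \<Longrightarrow> P xs"
  shows "P xs"
  using assms(1)
proof (induction xs rule: measure_induct_rule[where f = length])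
  case (less xs)
  show ?case
  proof (cases "length xs = 1")
    case True
    then show ?thesis using single by (cases xs) auto
  next
    case False
    moreover have "length xs \<noteq> 0" using less.prems by simp
    ultimately have "2 \<le> length xs" by linarith
    moreover have "P (take (split_pt sp xs) xs)" "P (drop (split_pt sp xs) xs)"
      using split_pt_bounds[OF \<open>2 \<le> length xs\<close>, of sp] by (auto intro!: less.IH)
    ultimately show ?thesis using split by blast
  qed
qed

lemma bst_msort_single: "bst_msort sp M [x] = Node Leaf x Leaf"
  by (simp add: bst_msort.simps)

lemma arb_msort_single: "arb_msort sp M t0 [x] = {(t0, x)}"
  by (simp add: arb_msort.simps)

lemma bst_msort_split:
  "2 \<le> length xs \<Longrightarrow> bst_msort sp M xs =
     fst (M (bst_msort sp M (take (split_pt sp xs) xs)) (bst_msort sp M (drop (split_pt sp xs) xs)))"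
  by (subst bst_msort.simps) auto

lemma arb_msort_parts_subset:
  "2 \<le> length xs \<Longrightarrow> arb_msort sp M t0 (take (split_pt sp xs) xs) \<union>
     arb_msort sp M (t0 + split_pt sp xs) (drop (split_pt sp xs) xs) \<subseteq> arb_msort sp M t0 xs"
  by (subst (3) arb_msort.simps) (auto simp: Let_def)

lemma arb_msort_diagonal:
  "xs \<noteq> [] \<Longrightarrow> i < length xs \<Longrightarrow> (t0 + i, xs ! i) \<in> arb_msort sp M t0 xs"
proof (induction xs arbitrary: t0 i rule: msort_split_induct[where sp = sp])
  case (single x)
  then show ?case by (simp add: arb_msort_single)
next
  case (split xs)
  define k where "k = split_pt sp xs"
  have k: "0 < k" "k < length xs" using split_pt_bounds[OF split.hyps] k_def by auto
  show ?case
  proof (cases "i < k")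
    case True
    then show ?thesis
      using split.IH(1)[of i t0] arb_msort_parts_subset[OF split.hyps, of sp M t0] k k_def by auto
  next
    case False
    then show ?thesis
      using split.IH(2)[of "i - k" "t0 + k"] arb_msort_parts_subset[OF split.hyps, of sp M t0] k k_def
        split.prems
      by auto
  qed
qed

lemma arb_msort_split:
  assumes "2 \<le> length xs"
  shows "arb_msort sp M t0 xs = arb_msort sp M t0 (take (split_pt sp xs) xs) \<union>
     arb_msort sp M (t0 + split_pt sp xs) (drop (split_pt sp xs) xs) \<union>
     {t0, t0 + split_pt sp xs - 1, t0 + length xs - 1} \<times>
       set_tree (snd (M (bst_msort sp M (take (split_pt sp xs) xs))
                        (bst_msort sp M (drop (split_pt sp xs) xs))))"
proof -
  have "take (split_pt sp xs) xs \<noteq> []" "drop (split_pt sp xs) xs \<noteq> []"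
    using split_pt_bounds[OF assms, of sp] by auto
  then have "arb_msort sp M t0 (take (split_pt sp xs) xs) \<noteq> {}"
    "arb_msort sp M (t0 + split_pt sp xs) (drop (split_pt sp xs) xs) \<noteq> {}"
    using arb_msort_diagonal[of _ 0] by (metis add_0_right empty_iff length_greater_0_conv)+
  then show ?thesis
    using assms by (subst arb_msort.simps) (auto simp: Let_def)
qed

lemma is_bst_mergeE:
  assumes "is_bst_merge M" "bst TA" "bst TB" "TA \<noteq> Leaf" "TB \<noteq> Leaf"
    and "set_tree TA \<inter> set_tree TB = {}"
  obtains \<sigma>A \<sigma>B where "bst_merge TA TB (fst (M TA TB)) (snd (M TA TB)) \<sigma>A \<sigma>B"
proof -
  have "let T = fst (M TA TB); \<tau> = snd (M TA TB) in
     bst T \<and> set_tree T = set_tree TA \<union> set_tree TB \<and> top_tree \<tau> T \<and>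
     (\<exists>ta tb. top_tree ta TA \<and> top_tree tb TB \<and> set_tree \<tau> = set_tree ta \<union> set_tree tb \<and>
        (\<forall>t\<in>hanging \<tau> T. t \<noteq> Leaf \<longrightarrow> t \<in> hanging ta TA \<union> hanging tb TB)) \<and>
     {x. block_boundary (set_tree TA) (set_tree TB) x} \<subseteq> set_tree \<tau>"
    using assms unfolding is_bst_merge_def by blast
  then show thesis
    using that assms(2,3,6) unfolding Let_def top_tree_def bst_merge_def by blast
qed

lemma msort_bst_merge:
  fixes sp :: "nat list \<Rightarrow> nat" and xs :: "nat list"
  defines "k \<equiv> split_pt sp xs"
  assumes "is_bst_merge M" "distinct xs" "2 \<le> length xs"
    and parts: "\<And>ys. ys \<in> {take k xs, drop k xs} \<Longrightarrow>
      bst (bst_msort sp M ys) \<and> set_tree (bst_msort sp M ys) = set ys"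
  obtains \<sigma>A \<sigma>B where "bst_merge (bst_msort sp M (take k xs)) (bst_msort sp M (drop k xs))
    (bst_msort sp M xs) (snd (M (bst_msort sp M (take k xs)) (bst_msort sp M (drop k xs)))) \<sigma>A \<sigma>B"
proof -
  define TA TB where "TA = bst_msort sp M (take k xs)" and "TB = bst_msort sp M (drop k xs)"
  have "take k xs \<noteq> []" "drop k xs \<noteq> []"
    using split_pt_bounds[OF assms(4), of sp] unfolding k_def by auto
  moreover have "set (take k xs) \<inter> set (drop k xs) = {}"
    using set_take_disj_set_drop_if_distinct[OF assms(3) order_refl] .
  ultimately have "bst TA" "bst TB" "TA \<noteq> Leaf" "TB \<noteq> Leaf" "set_tree TA \<inter> set_tree TB = {}"
    using parts[of "take k xs"] parts[of "drop k xs"] unfolding TA_def TB_def by auto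
  then obtain \<sigma>A \<sigma>B where "bst_merge TA TB (fst (M TA TB)) (snd (M TA TB)) \<sigma>A \<sigma>B"
    using is_bst_mergeE[OF assms(2)] by blast
  moreover have "bst_msort sp M xs = fst (M TA TB)"
    using bst_msort_split[OF assms(4)] unfolding TA_def TB_def k_def by simp
  ultimately show thesis
    using that unfolding TA_def TB_def by simp
qed

lemma bst_msort_bst_keys:
  assumes "is_bst_merge M" "distinct xs" "xs \<noteq> []"
  shows "bst (bst_msort sp M xs) \<and> set_tree (bst_msort sp M xs) = set xs"
  using assms(3,2)
proof (induction xs rule: msort_split_induct[where sp = sp])
  case (single x)
  then show ?case by (simp add: bst_msort_single)
next
  case (split xs)
  define k where "k = split_pt sp xs"
  have parts: "bst (bst_msort sp M ys) \<and> set_tree (bst_msort sp M ys) = set ys"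
    if "ys \<in> {take k xs, drop k xs}" for ys
    using split.IH split_pt_bounds[OF split.hyps, of sp] split.prems that unfolding k_def by auto
  obtain \<sigma>A \<sigma>B where "bst_merge (bst_msort sp M (take k xs)) (bst_msort sp M (drop k xs))
    (bst_msort sp M xs) (snd (M (bst_msort sp M (take k xs)) (bst_msort sp M (drop k xs)))) \<sigma>A \<sigma>B"
    using msort_bst_merge[OF assms(1) split.prems split.hyps] parts unfolding k_def by blast
  then show ?case
    using parts unfolding bst_merge_def by (simp flip: set_append)
qed

lemma arb_msort_range:
  assumes "is_bst_merge M" "distinct xs" "xs \<noteq> []" "(t, a) \<in> arb_msort sp M t0 xs"
  shows "t0 \<le> t \<and> t < t0 + length xs \<and> a \<in> set xs"
  using assms(3,2,4)
proof (induction xs arbitrary: t0 t a rule: msort_split_induct[where sp = sp])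
  case (single x)
  then show ?case by (simp add: arb_msort_single)
next
  case (split xs)
  define k where "k = split_pt sp xs"
  have k: "0 < k" "k < length xs" using split_pt_bounds[OF split.hyps] k_def by auto
  have parts: "bst (bst_msort sp M ys) \<and> set_tree (bst_msort sp M ys) = set ys"
    if "ys \<in> {take k xs, drop k xs}" for ys
    using bst_msort_bst_keys[OF assms(1), of "take k xs"] bst_msort_bst_keys[OF assms(1), of "drop k xs"]
      split.prems(1) k that by force
  obtain \<sigma>A \<sigma>B where "bst_merge (bst_msort sp M (take k xs)) (bst_msort sp M (drop k xs))
    (bst_msort sp M xs) (snd (M (bst_msort sp M (take k xs)) (bst_msort sp M (drop k xs)))) \<sigma>A \<sigma>B"
    using msort_bst_merge[OF assms(1) split.prems(1) split.hyps, where sp = sp] parts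
    unfolding k_def by blast
  moreover have "set_tree (bst_msort sp M (take k xs)) \<union> set_tree (bst_msort sp M (drop k xs)) = set xs"
    using parts by (simp flip: set_append)
  ultimately have "set_tree (snd (M (bst_msort sp M (take k xs)) (bst_msort sp M (drop k xs))))
      \<subseteq> set xs"
    using bst_merge.accessed_subset by blast
  moreover have "(t, a) \<in> arb_msort sp M t0 (take k xs) \<union> arb_msort sp M (t0 + k) (drop k xs) \<union>
      {t0, t0 + k - 1, t0 + length xs - 1} \<times>
        set_tree (snd (M (bst_msort sp M (take k xs)) (bst_msort sp M (drop k xs))))"
    using split.prems(2) arb_msort_split[OF split.hyps, of sp M t0] unfolding k_def by simp
  ultimately show ?case
    using split.IH[of t a t0] split.IH[of t a "t0 + k"] split.prems(1) k
      in_set_takeD[of a k xs] in_set_dropD[of a k xs]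
    unfolding k_def[symmetric] by auto
qed

lemma arb_msort_satisfied_ready:
  assumes "is_bst_merge M" "distinct xs" "xs \<noteq> []"
  shows "arborally_satisfied (arb_msort sp M t0 xs)
    \<and> ancestor_ready (arb_msort sp M t0 xs) t0 (bst_msort sp M xs)
    \<and> ancestor_ready (arb_msort sp M t0 xs) (t0 + length xs - 1) (bst_msort sp M xs)"
  using assms(3,2)
proof (induction xs arbitrary: t0 rule: msort_split_induct[where sp = sp])
  case (single x)
  then show ?case
    by (simp add: arb_msort_single bst_msort_single arborally_satisfied_def ancestor_ready_def)
next
  case (split xs)
  define k where "k = split_pt sp xs"
  define A B where "A = arb_msort sp M t0 (take k xs)" and "B = arb_msort sp M (t0 + k) (drop k xs)"
  define TA TB where "TA = bst_msort sp M (take k xs)" and "TB = bst_msort sp M (drop k xs)"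
  have k: "0 < k" "k < length xs" using split_pt_bounds[OF split.hyps] k_def by auto
  have IH: "arborally_satisfied A" "ancestor_ready A t0 TA" "ancestor_ready A (t0 + k - 1) TA"
    "arborally_satisfied B" "ancestor_ready B (Suc (t0 + k - 1)) TB"
    "ancestor_ready B (t0 + length xs - 1) TB"
    using split.IH[of t0] split.IH[of "t0 + k"] split.prems k
    unfolding A_def B_def TA_def TB_def k_def[symmetric] by auto
  have parts: "take k xs \<noteq> []" "drop k xs \<noteq> []" "distinct (take k xs)" "distinct (drop k xs)"
    using k split.prems by auto
  note keys = bst_msort_bst_keys[OF assms(1) parts(3,1)] bst_msort_bst_keys[OF assms(1) parts(4,2)]
  obtain \<sigma>A \<sigma>B where merge: "bst_merge TA TB (bst_msort sp M xs) (snd (M TA TB)) \<sigma>A \<sigma>B"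
    using msort_bst_merge[OF assms(1) split.prems split.hyps, where sp = sp] keys
    unfolding TA_def TB_def k_def by blast
  have A_range: "t0 \<le> t \<and> t \<le> t0 + k - 1 \<and> a \<in> set_tree TA" if "(t, a) \<in> A" for t a
    using arb_msort_range[OF assms(1) parts(3,1) that[unfolded A_def]] keys k unfolding TA_def by auto
  have B_range: "t0 + k - 1 < t \<and> t \<le> t0 + length xs - 1 \<and> a \<in> set_tree TB"
    if "(t, a) \<in> B" for t a
    using arb_msort_range[OF assms(1) parts(4,2) that[unfolded B_def]] keys k unfolding TB_def by auto
  interpret arboral_merge TA TB "bst_msort sp M xs" "snd (M TA TB)" \<sigma>A \<sigma>B A B
    t0 "t0 + k - 1" "t0 + length xs - 1"
    using merge IH A_range B_range k
    by (intro arboral_merge.intro arboral_merge_axioms.intro) auto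
  have "arb_msort sp M t0 xs = merged"
    using arb_msort_split[OF split.hyps, of sp M t0]
    unfolding merged_def unfolding A_def B_def TA_def TB_def k_def by simp
  then show ?case
    using merged_satisfied merged_ready_first merged_ready_last by simp
qed

theorem lemma1:
  fixes M :: "nat tree \<Rightarrow> nat tree \<Rightarrow> nat tree \<times> nat tree"
    and sp :: "nat list \<Rightarrow> nat"
    and \<pi> :: "nat list"
  assumes "is_bst_merge M"
    and "distinct \<pi>" and "set \<pi> = {1..length \<pi>}"
  shows "arborally_satisfied (arb_msort sp M 1 \<pi>)
       \<and> {(i + 1, \<pi> ! i) | i. i < length \<pi>} \<subseteq> arb_msort sp M 1 \<pi>"
proof (cases "\<pi> = []")
  case True
  then show ?thesis by (simp add: arb_msort.simps arborally_satisfied_def)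
next
  case False
  then show ?thesis
    using arb_msort_satisfied_ready[OF assms(1,2) False] arb_msort_diagonal[OF False, of _ 1 sp M]
    by (auto simp: add.commute)
qed

end
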